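(* Let $\mu$ be a probability measure on $\mathcal{F}=\mathbb{R}^{\{0,\dots,T\}}$ whose first-coordinate marginal is $m_0$, and let $L(\mu)$ be the mean-field propagation of $\mu$ (defined in the context). Then $L(\mu)$ is absolutely continuous with respect to the free-dynamics law $P$ and $$\frac{dL(\mu)}{dP}(\eta)=\int\exp\frac{1}{\sigma^2}\sum_{t=0}^{T-1}\Big[-\tfrac12\xi(t+1)^2+\Phi_{t+1}(\eta)\,\xi(t+1)\Big]\,dg_\mu(\xi),$$ with $\Phi_{t+1}(\eta)=\eta(t+1)+\theta$ for the formal models (AF, BF) and $\Phi_{t+1}(\eta)=\eta(t+1)+\theta-\varphi[\eta(t)+\theta]$ for the IF model.
   Context: $T\ge1$; $\mathcal{F}=\mathbb{R}^{\{0,\dots,T\}}$. Parameters: threshold $\theta\in\mathbb{R}$, $\sigma>0$, a probability measure $m_0$ on $\mathbb{R}$, $\bar J\in\mathbb{R}$, $J>0$. Transfer function $f$: Heaviside (BF and IF models) or $f(x)=e^x/(1+e^x)$ (AF model). For IF: $\gamma\in(0,1)$, $\vartheta<0<\theta$, $\varphi(u)=\gamma u$ if $\vartheta/\gamma<u<\theta$ and $\varphi(u)=\vartheta$ otherwise. For $\mu$ a probability measure on $\mathcal{F}$, $g_\mu$ is the Gaussian law on $\mathbb{R}^T$ (coordinates $\xi(t+1)$, $t=0,\dots,T-1$) with mean $m_\mu(t+1)=\bar J\int f[\eta(t)]d\mu(\eta)$ and covariance $c_\mu(s+1,t+1)=J^2\int f[\eta(s)]f[\eta(t)]d\mu(\eta)$.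 Free law $P$: the law on $\mathcal{F}$ of the process $u(0)\sim m_0$, $u(t+1)=w(t+1)-\theta$ (formal models) or $u(t+1)=\varphi[u(t)+\theta]+w(t+1)-\theta$ (IF), with $w(1),\dots,w(T)$ i.i.d. $\mathcal{N}(0,\sigma^2)$ independent of $u(0)$. Mean-field propagation: for $\mu$ with first marginal $m_0$, take independent $u\sim\mu$, $w\sim\mathcal{N}(0,\sigma^2I_T)$, $v\sim g_\mu$; $L(\mu)$ is the law of the process $\vartheta(0)=u(0)$, $\vartheta(t+1)=v(t+1)+w(t+1)-\theta$ (formal models) or $\vartheta(t+1)=\varphi[\vartheta(t)+\theta]+v(t+1)+w(t+1)-\theta$ (IF model), $t=0,\dots,T-1$. *)

theory Defs
  imports "HOL-Probability.Probability"
begin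

text \<open>The three network models: analog formal (AF), binary formal (BF), integrate-and-fire (IF).\<close>
datatype model = AF | BF | IF

definition heaviside :: "real \<Rightarrow> real" where
  "heaviside x = (if x \<ge> 0 then 1 else 0)"

definition sigmoid :: "real \<Rightarrow> real" where
  "sigmoid x = exp x / (1 + exp x)"

definition transfer :: "model \<Rightarrow> real \<Rightarrow> real" where
  "transfer M = (if M = AF then sigmoid else heaviside)"

definition phi_IF :: "real \<Rightarrow> real \<Rightarrow> real \<Rightarrow> real \<Rightarrow> real" where
  "phi_IF \<gamma> vth \<theta> u = (if vth / \<gamma> < u \<and> u < \<theta> then \<gamma> * u else vth)"

definition leak :: "model \<Rightarrow> real \<Rightarrow> real \<Rightarrow> real \<Rightarrow> real \<Rightarrow> real" where
  "leak M \<gamma> vth \<theta> x = (if M = IF then phi_IF \<gamma> vth \<theta> (x + \<theta>) else 0)"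

fun traj :: "(real \<Rightarrow> real) \<Rightarrow> real \<Rightarrow> real \<Rightarrow> (nat \<Rightarrow> real) \<Rightarrow> nat \<Rightarrow> real" where
  "traj lk \<theta> x0 inp 0 = x0"
| "traj lk \<theta> x0 inp (Suc t) = lk (traj lk \<theta> x0 inp t) + inp (Suc t) - \<theta>"

text \<open>The trajectory space F = R^{0..T} and the noise/field space R^{1..T}.\<close>
definition Fsp :: "nat \<Rightarrow> (nat \<Rightarrow> real) measure" where
  "Fsp T = PiM {0..T} (\<lambda>_. lborel)"

definition Rsp :: "nat \<Rightarrow> (nat \<Rightarrow> real) measure" where
  "Rsp T = PiM {1..T} (\<lambda>_. lborel)"

definition Wnoise :: "nat \<Rightarrow> real \<Rightarrow> (nat \<Rightarrow> real) measure" where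
  "Wnoise T \<sigma> = PiM {1..T} (\<lambda>_. density lborel (normal_density 0 \<sigma>))"

text \<open>Gaussian law on R^{1..T} with mean m and covariance c, characterised by its
  characteristic function (degenerate covariances allowed).\<close>
definition is_gaussian :: "nat \<Rightarrow> (nat \<Rightarrow> real) \<Rightarrow> (nat \<Rightarrow> nat \<Rightarrow> real) \<Rightarrow> (nat \<Rightarrow> real) measure \<Rightarrow> bool" where
  "is_gaussian T m c g \<longleftrightarrow> prob_space g \<and> sets g = sets (Rsp T) \<and>
     (\<forall>u :: nat \<Rightarrow> real.
        (CLINT \<xi>|g. cis (\<Sum>t\<in>{1..T}. u t * \<xi> t)) =
        cis (\<Sum>t\<in>{1..T}. u t * m t) *
        complex_of_real (exp (- (1/2) * (\<Sum>s\<in>{1..T}. \<Sum>t\<in>{1..T}. u s * c s t * u t))))"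

definition gaussian_law :: "nat \<Rightarrow> (nat \<Rightarrow> real) \<Rightarrow> (nat \<Rightarrow> nat \<Rightarrow> real) \<Rightarrow> (nat \<Rightarrow> real) measure" where
  "gaussian_law T m c = (SOME g. is_gaussian T m c g)"

definition m_mu :: "model \<Rightarrow> real \<Rightarrow> (nat \<Rightarrow> real) measure \<Rightarrow> nat \<Rightarrow> real" where
  "m_mu M Jbar \<mu> k = Jbar * (\<integral>\<eta>. transfer M (\<eta> (k - 1)) \<partial>\<mu>)"

definition c_mu :: "model \<Rightarrow> real \<Rightarrow> (nat \<Rightarrow> real) measure \<Rightarrow> nat \<Rightarrow> nat \<Rightarrow> real" where
  "c_mu M J \<mu> s t = J\<^sup>2 * (\<integral>\<eta>. transfer M (\<eta> (s - 1)) * transfer M (\<eta> (t - 1)) \<partial>\<mu>)"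

definition g_mu :: "model \<Rightarrow> nat \<Rightarrow> real \<Rightarrow> real \<Rightarrow> (nat \<Rightarrow> real) measure \<Rightarrow> (nat \<Rightarrow> real) measure" where
  "g_mu M T Jbar J \<mu> = gaussian_law T (m_mu M Jbar \<mu>) (c_mu M J \<mu>)"

definition free_law :: "model \<Rightarrow> real \<Rightarrow> real \<Rightarrow> real \<Rightarrow> real \<Rightarrow> real measure \<Rightarrow> nat \<Rightarrow> (nat \<Rightarrow> real) measure" where
  "free_law M \<gamma> vth \<theta> \<sigma> m0 T =
     distr (m0 \<Otimes>\<^sub>M Wnoise T \<sigma>) (Fsp T)
       (\<lambda>(x0, w). restrict (traj (leak M \<gamma> vth \<theta>) \<theta> x0 w) {0..T})"

definition mf_prop :: "model \<Rightarrow> real \<Rightarrow> real \<Rightarrow> real \<Rightarrow> real \<Rightarrow> real \<Rightarrow> real \<Rightarrow> nat \<Rightarrow>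
    (nat \<Rightarrow> real) measure \<Rightarrow> (nat \<Rightarrow> real) measure" where
  "mf_prop M \<gamma> vth \<theta> \<sigma> Jbar J T \<mu> =
     distr ((\<mu> \<Otimes>\<^sub>M Wnoise T \<sigma>) \<Otimes>\<^sub>M g_mu M T Jbar J \<mu>) (Fsp T)
       (\<lambda>((u, w), v). restrict (traj (leak M \<gamma> vth \<theta>) \<theta> (u 0) (\<lambda>t. v t + w t)) {0..T})"

definition Phi :: "model \<Rightarrow> real \<Rightarrow> real \<Rightarrow> real \<Rightarrow> (nat \<Rightarrow> real) \<Rightarrow> nat \<Rightarrow> real" where
  "Phi M \<gamma> vth \<theta> \<eta> k = \<eta> k + \<theta> - leak M \<gamma> vth \<theta> (\<eta> (k - 1))"

end

theory Submission
  imports Defs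
begin

text \<open>Conditionally on the Gaussian field v, the mean-field dynamics is the free dynamics driven
  by the shifted noise v + w, and the path determines its input: Phi recovers w(t+1) from the path.
  Hence the Cameron-Martin formula for the shift w \<mapsto> v + w of the noise N(0, \<sigma>^2 I) gives the
  conditional law of the path the density
  exp (1/\<sigma>^2 \<Sum>t (- v(t+1)^2 / 2 + Phi_{t+1} v(t+1))) with respect to P, and integrating
  over v ~ g_mu with Tonelli's theorem gives the density of L(mu). That the Gaussian law g_mu
  exists at all follows by factoring the positive semidefinite covariance c_mu = A A^T and pushing
  a standard Gaussian vector forward along z \<mapsto> m_mu + A z.\<close>

section \<open>Positive semidefinite matrices\<close>

definition quad_form :: "'i set \<Rightarrow> ('i \<Rightarrow> 'i \<Rightarrow> real) \<Rightarrow> ('i \<Rightarrow> real) \<Rightarrow> real" where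
  "quad_form I c u = (\<Sum>s\<in>I. \<Sum>t\<in>I. u s * c s t * u t)"

lemma quad_form_cong: "(\<And>s. s \<in> I \<Longrightarrow> u s = u' s) \<Longrightarrow> quad_form I c u = quad_form I c u'"
  unfolding quad_form_def by (intro sum.cong refl) auto

lemma quad_form_unit:
  assumes "finite I" "t \<in> I"
  shows "quad_form I c (\<lambda>x. if x = t then 1 else 0) = c t t"
proof -
  have "quad_form I c (\<lambda>x. if x = t then 1 else 0) = (\<Sum>s\<in>I. if s = t then c t t else 0)"
    unfolding quad_form_def using assms by (intro sum.cong refl) (simp add: if_distrib cong: if_cong)
  then show ?thesis
    using assms by simp
qed

lemma quad_form_insert:
  assumes "finite I" "i \<notin> I" "\<And>s t. c s t = c t s"
  shows "quad_form (insert i I) c u =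
    u i * u i * c i i + 2 * u i * (\<Sum>j\<in>I. c i j * u j) + quad_form I c u"
proof -
  have "(\<Sum>s\<in>I. u s * c s i * u i) = u i * (\<Sum>j\<in>I. c i j * u j)"
    using assms(3) by (simp add: sum_distrib_left mult_ac)
  moreover have "(\<Sum>t\<in>I. u i * c i t * u t) = u i * (\<Sum>j\<in>I. c i j * u j)"
    by (simp add: sum_distrib_left mult_ac)
  ultimately show ?thesis
    using assms(1,2) by (simp add: quad_form_def sum.distrib algebra_simps)
qed

lemma quad_form_diff_rank_one:
  "quad_form I (\<lambda>s t. c s t - a s * a t) u = quad_form I c u - (\<Sum>s\<in>I. a s * u s)\<^sup>2"
proof -
  have "(\<Sum>s\<in>I. a s * u s)\<^sup>2 = (\<Sum>s\<in>I. \<Sum>t\<in>I. u s * (a s * a t) * u t)"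
    by (simp add: power2_eq_square sum_product mult_ac)
  then show ?thesis unfolding quad_form_def by (simp add: algebra_simps sum_subtractf)
qed

lemma psd_diag_nonneg:
  assumes "finite I" "i \<in> I" "\<And>u. quad_form I c u \<ge> 0"
  shows "c i i \<ge> 0"
  using assms(3)[of "\<lambda>x. if x = i then 1 else 0"] unfolding quad_form_unit[OF assms(1,2)] .

lemma psd_diag_zero_imp_row_zero:
  assumes "finite I" "i \<notin> I" "\<And>s t. c s t = c t s"
    and psd: "\<And>u. quad_form (insert i I) c u \<ge> 0"
    and "c i i = 0" "t \<in> I"
  shows "c i t = 0"
proof (rule ccontr)
  assume ne: "c i t \<noteq> 0"
  define l where "l = - (c t t + 1) / (2 * c i t)"
  define e where "e x = (if x = t then 1 else (0::real))" for x
  define u where "u = e(i := l)"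
  have "(\<Sum>j\<in>I. c i j * u j) = (\<Sum>j\<in>I. if j = t then c i t else 0)"
    using assms(2) by (intro sum.cong) (auto simp: u_def e_def)
  then have row: "(\<Sum>j\<in>I. c i j * u j) = c i t"
    using assms(1,6) by simp
  have "quad_form I c u = quad_form I c e"
    using assms(2) by (intro quad_form_cong) (auto simp: u_def)
  also have "\<dots> = c t t"
    unfolding e_def using assms(1,6) by (rule quad_form_unit)
  finally have "quad_form (insert i I) c u = 2 * l * c i t + c t t"
    using row by (simp add: quad_form_insert[OF assms(1-3)] \<open>c i i = 0\<close> u_def)
  also have "\<dots> = -1" using ne by (simp add: l_def field_simps)
  finally show False using psd[of u] by simp
qed

lemma psd_schur_complement:
  assumes "finite I" "i \<notin> I" "\<And>s t. c s t = c t s"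
    and psd: "\<And>u. quad_form (insert i I) c u \<ge> 0"
  defines "a s \<equiv> if c i i = 0 then 0 else c i s / sqrt (c i i)"
  shows "quad_form I (\<lambda>s t. c s t - a s * a t) u \<ge> 0"
proof -
  define d where "d = c i i"
  define b where "b = (\<Sum>j\<in>I. c i j * u j)"
  \<comment> \<open>complete u by the value at i that minimises the quadratic form\<close>
  define u' where "u' = u(i := (if d = 0 then 0 else - b / d))"
  have d: "d \<ge> 0"
    unfolding d_def using assms(1) by (intro psd_diag_nonneg[OF _ insertI1 psd]) simp
  have u'I: "quad_form I c u' = quad_form I c u" "(\<Sum>j\<in>I. c i j * u' j) = b"
    "(\<Sum>j\<in>I. u' j * c i j) = b"
    using assms(2) unfolding b_def by (auto simp: u'_def mult.commute intro!: quad_form_cong sum.cong)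
  have u'i: "u' i = (if d = 0 then 0 else - b / d)"
    by (simp add: u'_def)
  have "(\<Sum>s\<in>I. a s * u s) = (if d = 0 then 0 else b / sqrt d)"
    by (auto simp: a_def d_def b_def sum_divide_distrib)
  then have "quad_form I (\<lambda>s t. c s t - a s * a t) u = quad_form I c u - (if d = 0 then 0 else b\<^sup>2 / d)"
    using d by (simp add: quad_form_diff_rank_one power_divide)
  also have "\<dots> = quad_form (insert i I) c u'"
  proof (cases "d = 0")
    case True
    then have "b = 0"
      using psd_diag_zero_imp_row_zero[OF assms(1-3) psd] by (simp add: b_def d_def)
    with True show ?thesis
      by (simp add: quad_form_insert[OF assms(1-3)] u'I u'i)
  next
    case False
    then show ?thesis
      by (simp add: quad_form_insert[OF assms(1-3)] u'I u'i d_def[symmetric]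
          field_simps power2_eq_square)
  qed
  finally show ?thesis using psd[of u'] by simp
qed

lemma psd_factorization:
  assumes "finite I" "\<And>s t. c s t = c t s" "\<And>u. quad_form I c u \<ge> 0"
  shows "\<exists>A. \<forall>s\<in>I. \<forall>t\<in>I. c s t = (\<Sum>j\<in>I. A s j * A t j)"
  using assms
proof (induction I arbitrary: c rule: finite_induct)
  case empty
  then show ?case by auto
next
  case (insert i I)
  define a where "a s = (if c i i = 0 then 0 else c i s / sqrt (c i i))" for s
  have sym: "c s t - a s * a t = c t s - a t * a s" for s t
    using insert.prems(1) by (simp add: mult.commute)
  have psd: "quad_form I (\<lambda>s t. c s t - a s * a t) u \<ge> 0" for u
    using psd_schur_complement[OF insert.hyps insert.prems] by (simp add: a_def)
  obtain B where B: "\<forall>s\<in>I. \<forall>t\<in>I. c s t - a s * a t = (\<Sum>j\<in>I. B s j * B t j)"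
    using insert.IH[OF sym psd] by blast
  define A where "A s j = (if j = i then a s else if s = i then 0 else B s j)" for s j
  have pivot_row: "c i t = a i * a t" if "t \<in> insert i I" for t
  proof (cases "c i i = 0")
    case True
    then show ?thesis
      using that psd_diag_zero_imp_row_zero[OF insert.hyps insert.prems] by (auto simp: a_def)
  next
    case False
    have "c i i \<ge> 0"
      using insert.hyps(1) by (intro psd_diag_nonneg[OF _ insertI1 insert.prems(2)]) simp
    moreover from this False have "a i = sqrt (c i i)"
      by (simp add: a_def real_div_sqrt)
    ultimately show ?thesis
      using False by (simp add: a_def)
  qed
  show ?case
  proof (intro exI ballI)
    fix s t assume st: "s \<in> insert i I" "t \<in> insert i I"
    have split: "(\<Sum>j\<in>insert i I. A s j * A t j) = a s * a t + (\<Sum>j\<in>I. A s j * A t j)"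
      using insert.hyps by (simp add: A_def)
    show "c s t = (\<Sum>j\<in>insert i I. A s j * A t j)"
    proof (cases "s = i \<or> t = i")
      case True
      have "(\<Sum>j\<in>I. A s j * A t j) = 0"
        using True insert.hyps by (intro sum.neutral) (auto simp: A_def)
      then show ?thesis
        using True pivot_row st insert.prems(1)[of s t] by (auto simp: split mult.commute)
    next
      case False
      then have "(\<Sum>j\<in>I. A s j * A t j) = (\<Sum>j\<in>I. B s j * B t j)"
        using insert.hyps by (intro sum.cong) (auto simp: A_def)
      moreover have "c s t - a s * a t = (\<Sum>j\<in>I. B s j * B t j)"
        using False st B by auto
      ultimately show ?thesis by (simp add: split)
    qed
  qed
qed

lemma quad_form_gram:
  assumes "\<forall>s\<in>I. \<forall>t\<in>I. c s t = (\<Sum>j\<in>I. A s j * A t j)"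
  shows "quad_form I c u = (\<Sum>j\<in>I. (\<Sum>t\<in>I. u t * A t j)\<^sup>2)"
proof -
  have "quad_form I c u = (\<Sum>s\<in>I. \<Sum>t\<in>I. \<Sum>j\<in>I. (u s * A s j) * (u t * A t j))"
    unfolding quad_form_def using assms
    by (intro sum.cong refl) (simp add: sum_distrib_left sum_distrib_right mult_ac)
  also have "\<dots> = (\<Sum>j\<in>I. \<Sum>s\<in>I. \<Sum>t\<in>I. (u s * A s j) * (u t * A t j))"
    by (subst sum.swap) (rule sum.cong[OF refl], rule sum.swap)
  also have "\<dots> = (\<Sum>j\<in>I. (\<Sum>t\<in>I. u t * A t j)\<^sup>2)"
    by (simp add: power2_eq_square sum_product)
  finally show ?thesis .
qed

lemma quad_form_gram_integral_nonneg:
  assumes "\<And>s t. s \<in> I \<Longrightarrow> t \<in> I \<Longrightarrow> integrable \<mu> (\<lambda>x. f s x * f t x)"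
  shows "quad_form I (\<lambda>s t. \<integral>x. f s x * f t x \<partial>\<mu>) u \<ge> 0"
proof -
  have int: "integrable \<mu> (\<lambda>x. u s * u t * (f s x * f t x))" if "s \<in> I" "t \<in> I" for s t
    using assms[OF that] by simp
  have "quad_form I (\<lambda>s t. \<integral>x. f s x * f t x \<partial>\<mu>) u =
      (\<Sum>s\<in>I. \<Sum>t\<in>I. \<integral>x. u s * u t * (f s x * f t x) \<partial>\<mu>)"
    unfolding quad_form_def by (intro sum.cong refl) (simp add: mult_ac)
  also have "\<dots> = (\<integral>x. (\<Sum>s\<in>I. \<Sum>t\<in>I. u s * u t * (f s x * f t x)) \<partial>\<mu>)"
    using int by (simp add: Bochner_Integration.integral_sum Bochner_Integration.integrable_sum)
  also have "\<dots> = (\<integral>x. (\<Sum>s\<in>I. u s * f s x)\<^sup>2 \<partial>\<mu>)"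
    by (simp add: power2_eq_square sum_product mult_ac)
  also have "\<dots> \<ge> 0"
    by simp
  finally show ?thesis .
qed

section \<open>Product measures\<close>

lemma borel_measurable_PiM_component[measurable]:
  "(\<lambda>x::'i \<Rightarrow> real. x k) \<in> borel_measurable (PiM I (\<lambda>_. lborel))"
proof (cases "k \<in> I")
  case True
  then show ?thesis using measurable_component_singleton[of k I "\<lambda>_. lborel"] by simp
next
  case False
  \<comment> \<open>points of the product space are extensional: outside I they all take the value undefined\<close>
  have "(\<lambda>x::'i \<Rightarrow> real. x k) \<in> borel_measurable (PiM I (\<lambda>_. lborel)) \<longleftrightarrow>
      (\<lambda>_::'i \<Rightarrow> real. undefined :: real) \<in> borel_measurable (PiM I (\<lambda>_. lborel))"
    by (rule Sigma_Algebra.measurable_cong)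
      (use False in \<open>auto simp: space_PiM PiE_def extensional_def\<close>)
  then show ?thesis by simp
qed

lemma indicator_PiE_prod:
  assumes "finite I" "x \<in> extensional I"
  shows "(indicator (Pi\<^sub>E I A) x :: ennreal) = (\<Prod>i\<in>I. indicator (A i) (x i))"
  using assms by (auto simp: indicator_def PiE_def Pi_def prod_zero)

lemma distr_PiM_componentwise:
  assumes "finite I" "product_sigma_finite M" "product_sigma_finite (\<lambda>i. distr (M i) (N i) (f i))"
    and [measurable]: "\<And>i. i \<in> I \<Longrightarrow> f i \<in> measurable (M i) (N i)"
  shows "distr (PiM I M) (PiM I N) (\<lambda>x. \<lambda>i\<in>I. f i (x i)) = PiM I (\<lambda>i. distr (M i) (N i) (f i))"
proof -
  interpret M: product_sigma_finite M by fact
  interpret D: product_sigma_finite "\<lambda>i. distr (M i) (N i) (f i)" by fact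
  have [measurable]: "(\<lambda>x. \<lambda>i\<in>I. f i (x i)) \<in> measurable (PiM I M) (PiM I N)"
    by measurable
  show ?thesis
  proof (rule D.PiM_eqI[OF assms(1)])
    show "sets (distr (PiM I M) (PiM I N) (\<lambda>x. \<lambda>i\<in>I. f i (x i))) = sets (PiM I (\<lambda>i. distr (M i) (N i) (f i)))"
      by (simp cong: sets_PiM_cong)
  next
    fix A assume A: "\<And>i. i \<in> I \<Longrightarrow> A i \<in> sets (distr (M i) (N i) (f i))"
    have "(\<lambda>x. \<lambda>i\<in>I. f i (x i)) -` Pi\<^sub>E I A \<inter> space (PiM I M) = Pi\<^sub>E I (\<lambda>i. f i -` A i \<inter> space (M i))"
      using assms(4) by (auto simp: space_PiM PiE_def Pi_def measurable_def)
    moreover have "Pi\<^sub>E I A \<in> sets (PiM I N)"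
      using A by (auto intro!: sets_PiM_I_finite assms(1))
    ultimately show "emeasure (distr (PiM I M) (PiM I N) (\<lambda>x. \<lambda>i\<in>I. f i (x i))) (Pi\<^sub>E I A) =
        (\<Prod>i\<in>I. emeasure (distr (M i) (N i) (f i)) (A i))"
      using A assms(1) by (simp add: emeasure_distr M.emeasure_PiM)
  qed
qed

lemma PiM_density:
  assumes "finite I" "product_sigma_finite M" "product_sigma_finite (\<lambda>i. density (M i) (f i))"
    and [measurable]: "\<And>i. i \<in> I \<Longrightarrow> f i \<in> borel_measurable (M i)"
  shows "density (PiM I M) (\<lambda>x. \<Prod>i\<in>I. f i (x i)) = PiM I (\<lambda>i. density (M i) (f i))"
proof -
  interpret M: product_sigma_finite M by fact
  interpret D: product_sigma_finite "\<lambda>i. density (M i) (f i)" by fact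
  show ?thesis
  proof (rule D.PiM_eqI[OF assms(1)])
    show "sets (density (PiM I M) (\<lambda>x. \<Prod>i\<in>I. f i (x i))) = sets (PiM I (\<lambda>i. density (M i) (f i)))"
      by (simp cong: sets_PiM_cong)
  next
    fix A assume A: "\<And>i. i \<in> I \<Longrightarrow> A i \<in> sets (density (M i) (f i))"
    then have "Pi\<^sub>E I A \<in> sets (PiM I M)"
      by (auto intro!: sets_PiM_I_finite assms(1))
    then have "emeasure (density (PiM I M) (\<lambda>x. \<Prod>i\<in>I. f i (x i))) (Pi\<^sub>E I A) =
        (\<integral>\<^sup>+x. (\<Prod>i\<in>I. f i (x i)) * indicator (Pi\<^sub>E I A) x \<partial>PiM I M)"
      by (simp add: emeasure_density)
    also have "\<dots> = (\<integral>\<^sup>+x. (\<Prod>i\<in>I. f i (x i) * indicator (A i) (x i)) \<partial>PiM I M)"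
    proof (rule nn_integral_cong)
      fix x assume "x \<in> space (PiM I M)"
      then have "x \<in> extensional I" by (simp add: space_PiM PiE_def)
      then show "(\<Prod>i\<in>I. f i (x i)) * indicator (Pi\<^sub>E I A) x =
          (\<Prod>i\<in>I. f i (x i) * indicator (A i) (x i))"
        by (simp add: indicator_PiE_prod[OF assms(1)] prod.distrib)
    qed
    also have "\<dots> = (\<Prod>i\<in>I. emeasure (density (M i) (f i)) (A i))"
      using A by (subst M.product_nn_integral_prod[OF assms(1)]) (auto simp: emeasure_density)
    finally show "emeasure (density (PiM I M) (\<lambda>x. \<Prod>i\<in>I. f i (x i))) (Pi\<^sub>E I A) =
        (\<Prod>i\<in>I. emeasure (density (M i) (f i)) (A i))" .
  qed
qed

lemma distr_pair_measure_density_mixture: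
  assumes "sigma_finite_measure N" "sigma_finite_measure G" "sigma_finite_measure P"
    and H[measurable]: "H \<in> measurable (N \<Otimes>\<^sub>M G) X" and sets_P: "sets P = sets X"
    and f[measurable]: "(\<lambda>(x, v). f x v) \<in> borel_measurable (P \<Otimes>\<^sub>M G)"
    and fibre: "\<And>v. v \<in> space G \<Longrightarrow> distr N X (\<lambda>p. H (p, v)) = density P (\<lambda>x. f x v)"
  shows "distr (N \<Otimes>\<^sub>M G) X H = density P (\<lambda>x. \<integral>\<^sup>+v. f x v \<partial>G)"
proof (rule measure_eqI)
  interpret NG: pair_sigma_finite N G
    using assms(1,2) by (simp add: pair_sigma_finite_def)
  interpret PG: pair_sigma_finite P G
    using assms(2,3) by (simp add: pair_sigma_finite_def)
  show "sets (distr (N \<Otimes>\<^sub>M G) X H) = sets (density P (\<lambda>x. \<integral>\<^sup>+v. f x v \<partial>G))"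
    by (simp add: sets_P)
  fix A assume "A \<in> sets (distr (N \<Otimes>\<^sub>M G) X H)"
  then have A[measurable]: "A \<in> sets X" "A \<in> sets P" by (simp_all add: sets_P)
  have "emeasure (distr (N \<Otimes>\<^sub>M G) X H) A = (\<integral>\<^sup>+q. indicator A (H q) \<partial>(N \<Otimes>\<^sub>M G))"
    by (simp add: emeasure_distr nn_integral_distr flip: nn_integral_indicator)
  also have "\<dots> = (\<integral>\<^sup>+v. \<integral>\<^sup>+p. indicator A (H (p, v)) \<partial>N \<partial>G)"
    by (rule NG.nn_integral_snd[symmetric]) measurable
  also have "\<dots> = (\<integral>\<^sup>+v. \<integral>\<^sup>+x. f x v * indicator A x \<partial>P \<partial>G)"
  proof (rule nn_integral_cong)
    fix v assume v: "v \<in> space G"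
    have [measurable]: "(\<lambda>p. H (p, v)) \<in> measurable N X"
      by (rule measurable_compose[OF measurable_Pair2'[OF v] H])
    have "(\<integral>\<^sup>+p. indicator A (H (p, v)) \<partial>N) = emeasure (distr N X (\<lambda>p. H (p, v))) A"
      by (simp add: emeasure_distr nn_integral_distr flip: nn_integral_indicator)
    then show "(\<integral>\<^sup>+p. indicator A (H (p, v)) \<partial>N) = (\<integral>\<^sup>+x. f x v * indicator A x \<partial>P)"
      using v by (simp add: fibre emeasure_density sets_P)
  qed
  also have "\<dots> = (\<integral>\<^sup>+x. \<integral>\<^sup>+v. f x v * indicator A x \<partial>G \<partial>P)"
  proof (rule PG.Fubini')
    have "(\<lambda>p. indicator A (fst p) :: ennreal) \<in> borel_measurable (P \<Otimes>\<^sub>M G)"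
      by (rule measurable_compose[OF measurable_fst borel_measurable_indicator[OF A(2)]])
    with f show "(\<lambda>(x, v). f x v * indicator A x) \<in> borel_measurable (P \<Otimes>\<^sub>M G)"
      unfolding split_beta' by (rule borel_measurable_times_ennreal)
  qed
  also have "\<dots> = (\<integral>\<^sup>+x. (\<integral>\<^sup>+v. f x v \<partial>G) * indicator A x \<partial>P)"
  proof (rule nn_integral_cong)
    fix x assume x: "x \<in> space P"
    have "(\<lambda>v. f x v) \<in> borel_measurable G"
      using measurable_compose[OF measurable_Pair1'[OF x] f] by simp
    then show "(\<integral>\<^sup>+v. f x v * indicator A x \<partial>G) = (\<integral>\<^sup>+v. f x v \<partial>G) * indicator A x"
      by (rule nn_integral_multc)
  qed
  also have "\<dots> = emeasure (density P (\<lambda>x. \<integral>\<^sup>+v. f x v \<partial>G)) A"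
    by (simp add: emeasure_density sets_P)
  finally show "emeasure (distr (N \<Otimes>\<^sub>M G) X H) A = emeasure (density P (\<lambda>x. \<integral>\<^sup>+v. f x v \<partial>G)) A" .
qed

section \<open>Gaussian vectors\<close>

lemma cis_sum: "cis (sum f A) = (\<Prod>x\<in>A. cis (f x))"
  by (induction A rule: infinite_finite_induct) (auto simp: cis_mult[symmetric])

lemma borel_measurable_cis[measurable]: "cis \<in> borel_measurable borel"
  unfolding cis_conv_exp by (intro borel_measurable_continuous_onI continuous_intros)

lemma char_PiM_std_normal_linear:
  fixes I :: "'i set"
  assumes "finite I"
  shows "(CLINT z|PiM I (\<lambda>_. std_normal_distribution). cis (\<Sum>j\<in>I. b j * z j)) =
    complex_of_real (exp (- (1/2) * (\<Sum>j\<in>I. (b j)\<^sup>2)))"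
proof -
  let ?N = "std_normal_distribution"
  interpret N: product_prob_space "\<lambda>_::'i. ?N"
    by (intro product_prob_spaceI) (simp add: prob_space_normal_density)
  have "(CLINT z|PiM I (\<lambda>_. ?N). cis (\<Sum>j\<in>I. b j * z j)) =
      (CLINT z|PiM I (\<lambda>_. ?N). (\<Prod>j\<in>I. cis (b j * z j)))"
    by (simp add: cis_sum)
  also have "\<dots> = (\<Prod>j\<in>I. CLINT x|?N. cis (b j * x))"
    using assms by (intro N.product_integral_prod N.M.integrable_const_bound[where B=1]) auto
  also have "\<dots> = (\<Prod>j\<in>I. complex_of_real (exp (- (b j)\<^sup>2 / 2)))"
  proof (intro prod.cong refl)
    fix j
    have "(CLINT x|?N. cis (b j * x)) = char ?N (b j)"
      unfolding char_def by (simp add: cis_conv_exp)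
    then show "(CLINT x|?N. cis (b j * x)) = complex_of_real (exp (- (b j)\<^sup>2 / 2))"
      by (simp add: char_std_normal_distribution)
  qed
  also have "\<dots> = complex_of_real (exp (- (1/2) * (\<Sum>j\<in>I. (b j)\<^sup>2)))"
    using assms by (simp add: exp_sum sum_distrib_left flip: of_real_prod sum_negf)
  finally show ?thesis .
qed

lemma gaussian_law_is_gaussian:
  assumes "\<And>s t. c s t = c t s" "\<And>u. quad_form {1..T} c u \<ge> 0"
  shows "is_gaussian T m c (gaussian_law T m c)"
proof -
  let ?I = "{1..T}"
  obtain A where A: "\<forall>s\<in>?I. \<forall>t\<in>?I. c s t = (\<Sum>j\<in>?I. A s j * A t j)"
    using psd_factorization[of ?I c] assms by auto
  define Z where "Z = PiM ?I (\<lambda>_. std_normal_distribution)"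
  define G where "G z = (\<lambda>s\<in>?I. m s + (\<Sum>j\<in>?I. A s j * z j))" for z :: "nat \<Rightarrow> real"
  interpret Z: prob_space Z
    unfolding Z_def by (intro prob_space_PiM) (simp add: prob_space_normal_density)
  have G[measurable]: "G \<in> measurable Z (Rsp T)"
    unfolding G_def Z_def Rsp_def by measurable
  have "(CLINT \<xi>|distr Z (Rsp T) G. cis (\<Sum>t\<in>?I. u t * \<xi> t)) =
      cis (\<Sum>t\<in>?I. u t * m t) * complex_of_real (exp (- (1/2) * quad_form ?I c u))" for u
  proof -
    define b where "b j = (\<Sum>t\<in>?I. u t * A t j)" for j
    have linear: "(\<Sum>t\<in>?I. u t * G z t) = (\<Sum>t\<in>?I. u t * m t) + (\<Sum>j\<in>?I. b j * z j)" for z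
    proof -
      have "(\<Sum>t\<in>?I. u t * G z t) = (\<Sum>t\<in>?I. u t * m t) + (\<Sum>t\<in>?I. \<Sum>j\<in>?I. u t * A t j * z j)"
        by (simp add: G_def algebra_simps sum.distrib sum_distrib_left)
      also have "(\<Sum>t\<in>?I. \<Sum>j\<in>?I. u t * A t j * z j) = (\<Sum>j\<in>?I. b j * z j)"
        unfolding b_def sum_distrib_right by (rule sum.swap)
      finally show ?thesis .
    qed
    have "(CLINT \<xi>|distr Z (Rsp T) G. cis (\<Sum>t\<in>?I. u t * \<xi> t)) =
        (CLINT z|Z. cis (\<Sum>t\<in>?I. u t * G z t))"
      by (rule integral_distr[OF G]) (simp add: Rsp_def)
    also have "\<dots> = (CLINT z|Z. cis (\<Sum>t\<in>?I. u t * m t) * cis (\<Sum>j\<in>?I. b j * z j))"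
      unfolding linear cis_mult ..
    also have "\<dots> = cis (\<Sum>t\<in>?I. u t * m t) * complex_of_real (exp (- (1/2) * (\<Sum>j\<in>?I. (b j)\<^sup>2)))"
      by (simp add: Z_def char_PiM_std_normal_linear)
    finally show ?thesis
      unfolding quad_form_gram[OF A] b_def .
  qed
  then have "is_gaussian T m c (distr Z (Rsp T) G)"
    by (simp add: is_gaussian_def quad_form_def Z.prob_space_distr)
  then show ?thesis
    unfolding gaussian_law_def by (rule someI)
qed

lemma borel_measurable_transfer[measurable]: "transfer M \<in> borel_measurable borel"
proof -
  have "sigmoid \<in> borel_measurable borel"
    unfolding sigmoid_def[abs_def]
    by (intro borel_measurable_continuous_onI continuous_intros)
      (metis add_pos_pos exp_gt_zero zero_less_one less_irrefl)
  moreover have "heaviside \<in> borel_measurable borel"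
    unfolding heaviside_def[abs_def] by measurable
  ultimately show ?thesis unfolding transfer_def by auto
qed

lemma transfer_bounds: "0 \<le> transfer M x" "transfer M x \<le> 1"
  by (auto simp: transfer_def sigmoid_def heaviside_def add_pos_pos)

lemma g_mu_is_gaussian:
  assumes "prob_space \<mu>" "sets \<mu> = sets (Fsp T)"
  shows "is_gaussian T (m_mu M Jbar \<mu>) (c_mu M J \<mu>) (g_mu M T Jbar J \<mu>)"
  unfolding g_mu_def
proof (rule gaussian_law_is_gaussian)
  interpret prob_space \<mu> by fact
  let ?f = "\<lambda>s \<eta>. transfer M (\<eta> (s - 1))"
  have [measurable]: "(\<lambda>\<eta>. \<eta> k) \<in> borel_measurable \<mu>" for k
    unfolding measurable_cong_sets[OF assms(2) refl] Fsp_def by measurable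
  have "integrable \<mu> (\<lambda>\<eta>. ?f s \<eta> * ?f t \<eta>)" for s t
    by (intro integrable_const_bound[where B=1]) (auto simp: transfer_bounds mult_le_one)
  then have "quad_form {1..T} (\<lambda>s t. \<integral>\<eta>. ?f s \<eta> * ?f t \<eta> \<partial>\<mu>) u \<ge> 0" for u
    by (rule quad_form_gram_integral_nonneg)
  moreover have "quad_form {1..T} (c_mu M J \<mu>) u =
      J\<^sup>2 * quad_form {1..T} (\<lambda>s t. \<integral>\<eta>. ?f s \<eta> * ?f t \<eta> \<partial>\<mu>) u" for u
    by (simp add: quad_form_def c_mu_def sum_distrib_left mult_ac)
  ultimately show "quad_form {1..T} (c_mu M J \<mu>) u \<ge> 0" for u
    by simp
  show "c_mu M J \<mu> s t = c_mu M J \<mu> t s" for s t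
    by (simp add: c_mu_def mult.commute)
qed

section \<open>The Cameron-Martin formula\<close>

lemma normal_density_shift:
  assumes "\<sigma> > 0"
  shows "normal_density a \<sigma> x = normal_density 0 \<sigma> x * exp ((- a\<^sup>2 / 2 + x * a) / \<sigma>\<^sup>2)"
proof -
  have "- (x - a)\<^sup>2 / (2 * \<sigma>\<^sup>2) = - (x - 0)\<^sup>2 / (2 * \<sigma>\<^sup>2) + (- a\<^sup>2 / 2 + x * a) / \<sigma>\<^sup>2"
    using assms by (simp add: field_simps power2_eq_square)
  then have "exp (- (x - a)\<^sup>2 / (2 * \<sigma>\<^sup>2)) =
      exp (- (x - 0)\<^sup>2 / (2 * \<sigma>\<^sup>2)) * exp ((- a\<^sup>2 / 2 + x * a) / \<sigma>\<^sup>2)"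
    by (simp only: exp_add)
  then show ?thesis
    unfolding normal_density_def by (simp only: mult.assoc)
qed

lemma distr_shift_normal_density:
  assumes "\<sigma> > 0"
  shows "distr (density lborel (normal_density 0 \<sigma>)) borel (\<lambda>x. a + x) =
    density (density lborel (normal_density 0 \<sigma>)) (\<lambda>x. exp ((- a\<^sup>2 / 2 + x * a) / \<sigma>\<^sup>2))"
proof -
  have "distr (density lborel (normal_density 0 \<sigma>)) borel (\<lambda>x. a + x) =
      distr (density lborel (\<lambda>x. normal_density a \<sigma> (a + x))) borel ((+) a)"
    by (simp add: normal_density_def)
  also have "\<dots> = density (distr lborel borel ((+) a)) (normal_density a \<sigma>)"
    by (simp add: density_distr)
  also have "\<dots> = density lborel (\<lambda>x. normal_density 0 \<sigma> x * exp ((- a\<^sup>2 / 2 + x * a) / \<sigma>\<^sup>2))"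
    using assms by (simp add: lborel_distr_plus normal_density_shift[of \<sigma> a])
  also have "\<dots> = density (density lborel (normal_density 0 \<sigma>)) (\<lambda>x. exp ((- a\<^sup>2 / 2 + x * a) / \<sigma>\<^sup>2))"
    by (simp add: density_density_eq ennreal_mult')
  finally show ?thesis .
qed

definition cameron_martin_density :: "real \<Rightarrow> 'i set \<Rightarrow> ('i \<Rightarrow> real) \<Rightarrow> ('i \<Rightarrow> real) \<Rightarrow> real" where
  "cameron_martin_density \<sigma> I a w = exp ((1 / \<sigma>\<^sup>2) * (\<Sum>k\<in>I. - (1/2) * (a k)\<^sup>2 + w k * a k))"

lemma cameron_martin_density_cong:
  "(\<And>k. k \<in> I \<Longrightarrow> w k = w' k) \<Longrightarrow> cameron_martin_density \<sigma> I a w = cameron_martin_density \<sigma> I a w'"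
  unfolding cameron_martin_density_def by (intro arg_cong[where f=exp] arg_cong2[where f="(*)"] sum.cong) auto

lemma cameron_martin_density_pos: "cameron_martin_density \<sigma> I a w > 0"
  by (simp add: cameron_martin_density_def)

lemma cameron_martin_density_le:
  "cameron_martin_density \<sigma> I a w \<le> exp ((\<Sum>k\<in>I. (w k)\<^sup>2 / 2) / \<sigma>\<^sup>2)"
proof -
  have "- (1/2) * (a k)\<^sup>2 + w k * a k \<le> (w k)\<^sup>2 / 2" for k
    using zero_le_power2[of "a k - w k"] by (simp add: power2_eq_square algebra_simps)
  then have "(\<Sum>k\<in>I. - (1/2) * (a k)\<^sup>2 + w k * a k) \<le> (\<Sum>k\<in>I. (w k)\<^sup>2 / 2)"
    by (rule sum_mono)
  then show ?thesis
    unfolding cameron_martin_density_def by (simp add: divide_right_mono)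
qed

lemma nn_integral_cameron_martin_density:
  assumes "finite_measure g" "sets g = sets (PiM I (\<lambda>_. lborel))"
  shows "(\<integral>\<^sup>+\<xi>. ennreal (cameron_martin_density \<sigma> I \<xi> w) \<partial>g) =
    ennreal (\<integral>\<xi>. cameron_martin_density \<sigma> I \<xi> w \<partial>g)"
proof (rule nn_integral_eq_integral)
  interpret finite_measure g by fact
  show "integrable g (\<lambda>\<xi>. cameron_martin_density \<sigma> I \<xi> w)"
  proof (rule integrable_const_bound)
    show "AE \<xi> in g. norm (cameron_martin_density \<sigma> I \<xi> w) \<le> exp ((\<Sum>k\<in>I. (w k)\<^sup>2 / 2) / \<sigma>\<^sup>2)"
      by (simp add: cameron_martin_density_le cameron_martin_density_pos less_imp_le)
    show "(\<lambda>\<xi>. cameron_martin_density \<sigma> I \<xi> w) \<in> borel_measurable g"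
      unfolding measurable_cong_sets[OF assms(2) refl] cameron_martin_density_def by measurable
  qed
qed (simp add: cameron_martin_density_pos less_imp_le)

lemma distr_shift_PiM_normal_density:
  fixes I :: "'i set"
  assumes "\<sigma> > 0" "finite I"
  shows "distr (PiM I (\<lambda>_. density lborel (normal_density 0 \<sigma>))) (PiM I (\<lambda>_. lborel))
      (\<lambda>w. \<lambda>i\<in>I. a i + w i) =
    density (PiM I (\<lambda>_. density lborel (normal_density 0 \<sigma>)))
      (\<lambda>w. ennreal (cameron_martin_density \<sigma> I a w))"
proof -
  let ?N = "density lborel (normal_density 0 \<sigma>)"
  define r where "r i x = ennreal (exp ((- (a i)\<^sup>2 / 2 + x * a i) / \<sigma>\<^sup>2))" for i x
  have N: "prob_space ?N"
    using assms(1) by (rule prob_space_normal_density)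
  have [measurable]: "r i \<in> borel_measurable borel" for i
    unfolding r_def by measurable
  have shift: "distr ?N lborel (\<lambda>x. a i + x) = density ?N (r i)" for i
  proof -
    have "distr ?N lborel (\<lambda>x. a i + x) = distr ?N borel (\<lambda>x. a i + x)"
      by (rule distr_cong) simp_all
    then show ?thesis
      unfolding r_def using distr_shift_normal_density[OF assms(1)] by simp
  qed
  have shifted_prob: "prob_space (distr ?N lborel (\<lambda>x. a i + x))" for i
    by (rule prob_space.prob_space_distr[OF N]) simp
  have product_N: "product_sigma_finite (\<lambda>_::'i. ?N)"
    using N by (intro product_prob_space.axioms(1) product_prob_spaceI)
  have product_shifted: "product_sigma_finite (\<lambda>i. distr ?N lborel (\<lambda>x. a i + x))"
    using shifted_prob by (intro product_prob_space.axioms(1) product_prob_spaceI)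
  have "distr (PiM I (\<lambda>_. ?N)) (PiM I (\<lambda>_. lborel)) (\<lambda>w. \<lambda>i\<in>I. a i + w i) =
      PiM I (\<lambda>i. distr ?N lborel (\<lambda>x. a i + x))"
    by (rule distr_PiM_componentwise[OF assms(2) product_N product_shifted]) simp
  also have "\<dots> = PiM I (\<lambda>i. density ?N (r i))"
    by (simp only: shift)
  also have "\<dots> = density (PiM I (\<lambda>_. ?N)) (\<lambda>w. \<Prod>i\<in>I. r i (w i))"
    using product_shifted
    by (intro PiM_density[symmetric, OF assms(2) product_N]) (simp_all add: shift r_def)
  also have "(\<lambda>w. \<Prod>i\<in>I. r i (w i)) = (\<lambda>w. ennreal (cameron_martin_density \<sigma> I a w))"
  proof
    fix w :: "'i \<Rightarrow> real"
    have "(1 / \<sigma>\<^sup>2) * (\<Sum>k\<in>I. - (1/2) * (a k)\<^sup>2 + w k * a k) =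
        (\<Sum>k\<in>I. (- (a k)\<^sup>2 / 2 + w k * a k) / \<sigma>\<^sup>2)"
      by (subst sum_distrib_left) (intro sum.cong refl, simp add: field_simps)
    then show "(\<Prod>i\<in>I. r i (w i)) = ennreal (cameron_martin_density \<sigma> I a w)"
      using assms(2) by (simp add: cameron_martin_density_def r_def exp_sum prod_ennreal)
  qed
  finally show ?thesis .
qed

lemma prob_space_Wnoise: "\<sigma> > 0 \<Longrightarrow> prob_space (Wnoise T \<sigma>)"
  unfolding Wnoise_def by (intro prob_space_PiM prob_space_normal_density)

lemma sets_Wnoise: "sets (Wnoise T \<sigma>) = sets (Rsp T)"
  unfolding Wnoise_def Rsp_def by (intro sets_PiM_cong) auto

section \<open>Paths driven by an input\<close>

definition driven_path :: "model \<Rightarrow> real \<Rightarrow> real \<Rightarrow> real \<Rightarrow> nat \<Rightarrow> real \<Rightarrow> (nat \<Rightarrow> real) \<Rightarrow> nat \<Rightarrow> real" where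
  "driven_path M \<gamma> vth \<theta> T x0 w = restrict (traj (leak M \<gamma> vth \<theta>) \<theta> x0 w) {0..T}"

lemma traj_cong_input:
  "(\<And>s. s \<in> {1..t} \<Longrightarrow> w s = w' s) \<Longrightarrow> traj lk \<theta> x0 w t = traj lk \<theta> x0 w' t"
  by (induction t) auto

lemma driven_path_restrict_input:
  "driven_path M \<gamma> vth \<theta> T x0 (restrict w {1..T}) = driven_path M \<gamma> vth \<theta> T x0 w"
  unfolding driven_path_def by (auto intro!: restrict_ext traj_cong_input)

lemma Phi_driven_path:
  assumes "k \<in> {1..T}"
  shows "Phi M \<gamma> vth \<theta> (driven_path M \<gamma> vth \<theta> T x0 w) k = w k"
  using assms by (cases k) (auto simp: Phi_def driven_path_def)

lemma borel_measurable_leak[measurable]: "leak M \<gamma> vth \<theta> \<in> borel_measurable borel"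
  unfolding leak_def phi_IF_def by (cases "M = IF") simp_all

lemma measurable_traj[measurable]:
  assumes [measurable]: "lk \<in> borel_measurable borel" "x0 \<in> borel_measurable N"
    "w \<in> measurable N (PiM I (\<lambda>_. lborel))"
  shows "(\<lambda>x. traj lk \<theta> (x0 x) (w x) t) \<in> borel_measurable N"
  by (induction t) simp_all

lemma measurable_driven_path[measurable]:
  assumes "x0 \<in> borel_measurable N" "w \<in> measurable N (PiM I (\<lambda>_. lborel))"
  shows "(\<lambda>x. driven_path M \<gamma> vth \<theta> T (x0 x) (w x)) \<in> measurable N (Fsp T)"
  unfolding driven_path_def Fsp_def using assms by (intro measurable_restrict) simp

lemma borel_measurable_Phi[measurable]:
  "(\<lambda>\<eta>. Phi M \<gamma> vth \<theta> \<eta> k) \<in> borel_measurable (PiM I (\<lambda>_. lborel))"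
  unfolding Phi_def by measurable

lemma prob_space_free_law:
  assumes "\<sigma> > 0" "prob_space m0" "sets m0 = sets borel"
  shows "prob_space (free_law M \<gamma> vth \<theta> \<sigma> m0 T)"
proof -
  interpret m0W: pair_prob_space m0 "Wnoise T \<sigma>"
    using assms
    by (simp add: pair_prob_space_def pair_sigma_finite_def prob_space_imp_sigma_finite prob_space_Wnoise)
  have "measurable (m0 \<Otimes>\<^sub>M Wnoise T \<sigma>) (Fsp T) = measurable (borel \<Otimes>\<^sub>M Rsp T) (Fsp T)"
    by (intro measurable_cong_sets sets_pair_measure_cong assms(3) sets_Wnoise refl)
  then have "(\<lambda>p. driven_path M \<gamma> vth \<theta> T (fst p) (snd p)) \<in> measurable (m0 \<Otimes>\<^sub>M Wnoise T \<sigma>) (Fsp T)"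
    by (simp add: Rsp_def)
  then show ?thesis
    unfolding free_law_def driven_path_def split_beta' by (rule m0W.prob_space_distr)
qed

section \<open>The density of the mean-field propagation\<close>

lemma measurable_mean_field_path:
  assumes "sets \<mu> = sets (Fsp T)" "sets g = sets (Rsp T)"
  shows "(\<lambda>((u, w), v). driven_path M \<gamma> vth \<theta> T (u 0) (\<lambda>t. v t + w t))
    \<in> measurable ((\<mu> \<Otimes>\<^sub>M Wnoise T \<sigma>) \<Otimes>\<^sub>M g) (Fsp T)"
proof -
  let ?R = "PiM {1..T} (\<lambda>_. lborel) :: (nat \<Rightarrow> real) measure"
  have "measurable ((\<mu> \<Otimes>\<^sub>M Wnoise T \<sigma>) \<Otimes>\<^sub>M g) (Fsp T) =
      measurable ((PiM {0..T} (\<lambda>_. lborel) \<Otimes>\<^sub>M ?R) \<Otimes>\<^sub>M ?R) (Fsp T)"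
    using assms sets_Wnoise
    by (intro measurable_cong_sets sets_pair_measure_cong) (simp_all add: Fsp_def Rsp_def)
  moreover have "(\<lambda>((u :: nat \<Rightarrow> real, w), v). driven_path M \<gamma> vth \<theta> T (u 0) (\<lambda>t. v t + w t)) =
      (\<lambda>q. driven_path M \<gamma> vth \<theta> T (fst (fst q) 0) (\<lambda>t\<in>{1..T}. snd q t + snd (fst q) t))"
    unfolding split_beta' driven_path_restrict_input ..
  moreover have "(\<lambda>q. driven_path M \<gamma> vth \<theta> T (fst (fst q) 0) (\<lambda>t\<in>{1..T}. snd q t + snd (fst q) t))
      \<in> measurable ((PiM {0..T} (\<lambda>_. lborel) \<Otimes>\<^sub>M ?R) \<Otimes>\<^sub>M ?R) (Fsp T)"
    by measurable
  ultimately show ?thesis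
    by (simp only:)
qed

lemma borel_measurable_cameron_martin_density_Phi:
  assumes "sets P = sets (Fsp T)" "sets g = sets (Rsp T)"
  shows "(\<lambda>(\<eta>, \<xi>). cameron_martin_density \<sigma> {1..T} \<xi> (Phi M \<gamma> vth \<theta> \<eta>)) \<in> borel_measurable (P \<Otimes>\<^sub>M g)"
proof -
  let ?R = "PiM {1..T} (\<lambda>_. lborel) :: (nat \<Rightarrow> real) measure"
  have "measurable (P \<Otimes>\<^sub>M g) (borel :: real measure) = measurable (PiM {0..T} (\<lambda>_. lborel) \<Otimes>\<^sub>M ?R) borel"
    using assms by (intro measurable_cong_sets sets_pair_measure_cong) (simp_all add: Fsp_def Rsp_def)
  moreover have "(\<lambda>(\<eta>, \<xi>). cameron_martin_density \<sigma> {1..T} \<xi> (Phi M \<gamma> vth \<theta> \<eta>))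
      \<in> borel_measurable (PiM {0..T} (\<lambda>_. lborel) \<Otimes>\<^sub>M ?R)"
    unfolding cameron_martin_density_def by measurable
  ultimately show ?thesis
    by (simp only:)
qed

lemma borel_measurable_integral_cameron_martin_density:
  assumes "finite_measure g" "sets g = sets (Rsp T)"
  shows "(\<lambda>\<eta>. \<integral>\<xi>. cameron_martin_density \<sigma> {1..T} \<xi> (Phi M \<gamma> vth \<theta> \<eta>) \<partial>g) \<in> borel_measurable (Fsp T)"
proof -
  interpret finite_measure g by fact
  show ?thesis
    using borel_measurable_cameron_martin_density_Phi[OF refl assms(2)]
    by (rule borel_measurable_lebesgue_integral)
qed

lemma distr_driven_path_shifted_input:
  fixes v :: "nat \<Rightarrow> real"
  assumes "\<sigma> > 0" "prob_space \<mu>" "sets \<mu> = sets (Fsp T)"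
  defines "m0 \<equiv> distr \<mu> borel (\<lambda>\<eta>. \<eta> 0)"
  shows "distr (\<mu> \<Otimes>\<^sub>M Wnoise T \<sigma>) (Fsp T) (\<lambda>(u, w). driven_path M \<gamma> vth \<theta> T (u 0) (\<lambda>t. v t + w t)) =
    density (free_law M \<gamma> vth \<theta> \<sigma> m0 T)
      (\<lambda>\<eta>. ennreal (cameron_martin_density \<sigma> {1..T} v (Phi M \<gamma> vth \<theta> \<eta>)))"
proof -
  let ?W = "Wnoise T \<sigma>"
  let ?\<Psi> = "\<lambda>p. driven_path M \<gamma> vth \<theta> T (fst p) (snd p)"
  let ?D = "\<lambda>\<eta>. ennreal (cameron_martin_density \<sigma> {1..T} v (Phi M \<gamma> vth \<theta> \<eta>))"
  define S where "S w = (\<lambda>t\<in>{1..T}. v t + w t)" for w :: "nat \<Rightarrow> real"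
  interpret W: prob_space ?W
    using assms(1) by (rule prob_space_Wnoise)
  note sets_W = sets_Wnoise[of T \<sigma>]
  have [measurable]: "(\<lambda>u. u 0) \<in> borel_measurable \<mu>"
    unfolding measurable_cong_sets[OF assms(3) refl] Fsp_def by measurable
  have [measurable]: "S \<in> measurable ?W (Rsp T)"
    unfolding measurable_cong_sets[OF sets_W refl] S_def Rsp_def by measurable
  have to_input: "(\<lambda>(u, w). (u 0, S w)) \<in> measurable (\<mu> \<Otimes>\<^sub>M ?W) (borel \<Otimes>\<^sub>M Rsp T)"
    by measurable
  have path: "?\<Psi> \<in> measurable (borel \<Otimes>\<^sub>M Rsp T) (Fsp T)"
    unfolding Rsp_def by measurable
  have shift: "distr ?W (Rsp T) S = density ?W (cameron_martin_density \<sigma> {1..T} v)"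
    unfolding Wnoise_def Rsp_def S_def using assms(1) by (rule distr_shift_PiM_normal_density) simp
  have "(\<lambda>(u :: nat \<Rightarrow> real, w). driven_path M \<gamma> vth \<theta> T (u 0) (\<lambda>t. v t + w t)) =
      ?\<Psi> \<circ> (\<lambda>(u, w). (u 0, S w))"
    unfolding S_def comp_def split_beta' fst_conv snd_conv driven_path_restrict_input ..
  then have "distr (\<mu> \<Otimes>\<^sub>M ?W) (Fsp T) (\<lambda>(u, w). driven_path M \<gamma> vth \<theta> T (u 0) (\<lambda>t. v t + w t)) =
      distr (distr (\<mu> \<Otimes>\<^sub>M ?W) (borel \<Otimes>\<^sub>M Rsp T) (\<lambda>(u, w). (u 0, S w))) (Fsp T) ?\<Psi>"
    by (simp add: distr_distr[OF path to_input])
  also have "distr (\<mu> \<Otimes>\<^sub>M ?W) (borel \<Otimes>\<^sub>M Rsp T) (\<lambda>(u, w). (u 0, S w)) =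
      m0 \<Otimes>\<^sub>M distr ?W (Rsp T) S"
    unfolding m0_def
    by (intro pair_measure_distr[symmetric]) (simp_all add: prob_space_imp_sigma_finite W.prob_space_distr)
  also have "\<dots> = density m0 (\<lambda>_. 1) \<Otimes>\<^sub>M density ?W (cameron_martin_density \<sigma> {1..T} v)"
    by (simp only: shift density_1)
  also have "\<dots> =
      density (m0 \<Otimes>\<^sub>M ?W) (\<lambda>(x0, w). 1 * ennreal (cameron_martin_density \<sigma> {1..T} v w))"
  proof (rule pair_measure_density)
    show "(\<lambda>w. ennreal (cameron_martin_density \<sigma> {1..T} v w)) \<in> borel_measurable ?W"
      unfolding measurable_cong_sets[OF sets_W refl] Rsp_def cameron_martin_density_def by measurable
    show "sigma_finite_measure (density ?W (cameron_martin_density \<sigma> {1..T} v))"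
      using W.prob_space_distr[of S "Rsp T"] by (simp add: shift prob_space_imp_sigma_finite)
  qed (simp_all add: W.sigma_finite_measure_axioms)
  \<comment> \<open>the weight is a function of the path, since Phi recovers the input from it\<close>
  also have "(\<lambda>(x0, w). 1 * ennreal (cameron_martin_density \<sigma> {1..T} v w)) = (\<lambda>p. ?D (?\<Psi> p))"
    by (intro ext) (auto intro!: arg_cong[where f=ennreal] cameron_martin_density_cong simp: Phi_driven_path)
  also have "distr (density (m0 \<Otimes>\<^sub>M ?W) (\<lambda>p. ?D (?\<Psi> p))) (Fsp T) ?\<Psi> =
      density (distr (m0 \<Otimes>\<^sub>M ?W) (Fsp T) ?\<Psi>) ?D"
  proof (rule density_distr[symmetric])
    show "?D \<in> borel_measurable (Fsp T)"
      unfolding Fsp_def cameron_martin_density_def by measurable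
    have "sets (m0 \<Otimes>\<^sub>M ?W) = sets (borel \<Otimes>\<^sub>M Rsp T)"
      by (intro sets_pair_measure_cong sets_W) (simp add: m0_def)
    then have "measurable (m0 \<Otimes>\<^sub>M ?W) (Fsp T) = measurable (borel \<Otimes>\<^sub>M Rsp T) (Fsp T)"
      by (rule measurable_cong_sets) simp
    with path show "?\<Psi> \<in> measurable (m0 \<Otimes>\<^sub>M ?W) (Fsp T)"
      by simp
  qed
  also have "distr (m0 \<Otimes>\<^sub>M ?W) (Fsp T) ?\<Psi> = free_law M \<gamma> vth \<theta> \<sigma> m0 T"
    by (simp add: free_law_def driven_path_def split_beta')
  finally show ?thesis .
qed

lemma mf_prop_eq_density:
  assumes "\<sigma> > 0" "prob_space \<mu>" "sets \<mu> = sets (Fsp T)"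
  shows "mf_prop M \<gamma> vth \<theta> \<sigma> Jbar J T \<mu> =
    density (free_law M \<gamma> vth \<theta> \<sigma> (distr \<mu> borel (\<lambda>\<eta>. \<eta> 0)) T)
      (\<lambda>\<eta>. ennreal (\<integral>\<xi>. cameron_martin_density \<sigma> {1..T} \<xi> (Phi M \<gamma> vth \<theta> \<eta>) \<partial>g_mu M T Jbar J \<mu>))"
proof -
  let ?W = "Wnoise T \<sigma>"
  let ?g = "g_mu M T Jbar J \<mu>"
  let ?P = "free_law M \<gamma> vth \<theta> \<sigma> (distr \<mu> borel (\<lambda>\<eta>. \<eta> 0)) T"
  let ?H = "\<lambda>((u :: nat \<Rightarrow> real, w), v). driven_path M \<gamma> vth \<theta> T (u 0) (\<lambda>t. v t + w t)"
  let ?f = "\<lambda>\<eta> \<xi>. ennreal (cameron_martin_density \<sigma> {1..T} \<xi> (Phi M \<gamma> vth \<theta> \<eta>))"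
  interpret \<mu>: prob_space \<mu> by fact
  interpret g: prob_space ?g
    using g_mu_is_gaussian[OF assms(2,3)] by (simp add: is_gaussian_def)
  interpret W: prob_space ?W
    using assms(1) by (rule prob_space_Wnoise)
  interpret \<mu>W: pair_prob_space \<mu> ?W ..
  interpret P: prob_space ?P
    using assms(1) \<mu>.prob_space_distr[of "\<lambda>\<eta>. \<eta> 0" borel]
    by (intro prob_space_free_law) (simp_all add: measurable_cong_sets[OF assms(3) refl] Fsp_def)
  have sets_g: "sets ?g = sets (Rsp T)"
    using g_mu_is_gaussian[OF assms(2,3)] by (simp add: is_gaussian_def)
  have sets_P: "sets ?P = sets (Fsp T)"
    by (simp add: free_law_def)
  have "mf_prop M \<gamma> vth \<theta> \<sigma> Jbar J T \<mu> = distr ((\<mu> \<Otimes>\<^sub>M ?W) \<Otimes>\<^sub>M ?g) (Fsp T) ?H"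
    by (simp add: mf_prop_def driven_path_def)
  also have "\<dots> = density ?P (\<lambda>\<eta>. \<integral>\<^sup>+\<xi>. ?f \<eta> \<xi> \<partial>?g)"
  proof (rule distr_pair_measure_density_mixture)
    show "(\<lambda>(\<eta>, \<xi>). ?f \<eta> \<xi>) \<in> borel_measurable (?P \<Otimes>\<^sub>M ?g)"
      using borel_measurable_cameron_martin_density_Phi[OF sets_P sets_g]
      unfolding split_beta' by (rule measurable_compose[OF _ measurable_ennreal])
    show "distr (\<mu> \<Otimes>\<^sub>M ?W) (Fsp T) (\<lambda>p. ?H (p, v)) = density ?P (\<lambda>\<eta>. ?f \<eta> v)" for v
      using distr_driven_path_shifted_input[OF assms] by (simp add: split_beta')
  qed (simp_all add: measurable_mean_field_path[OF assms(3) sets_g] sets_P prob_space_imp_sigma_finite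
      \<mu>W.P.prob_space_axioms g.prob_space_axioms P.prob_space_axioms)
  also have "(\<lambda>\<eta>. \<integral>\<^sup>+\<xi>. ?f \<eta> \<xi> \<partial>?g) =
      (\<lambda>\<eta>. ennreal (\<integral>\<xi>. cameron_martin_density \<sigma> {1..T} \<xi> (Phi M \<gamma> vth \<theta> \<eta>) \<partial>?g))"
    using sets_g by (simp add: nn_integral_cameron_martin_density g.finite_measure_axioms Rsp_def)
  finally show ?thesis .
qed

theorem mainTheorem5:
  fixes T :: nat and M :: model
    and \<theta> \<sigma> Jbar J \<gamma> vth :: real
    and m0 :: "real measure" and \<mu> :: "(nat \<Rightarrow> real) measure"
  assumes "T \<ge> 1" and "\<sigma> > 0" and "J > 0"
    and "M = IF \<longrightarrow> (0 < \<gamma> \<and> \<gamma> < 1 \<and> vth < 0 \<and> 0 < \<theta>)"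
    and "prob_space m0" and "sets m0 = sets borel"
    and "prob_space \<mu>" and "sets \<mu> = sets (Fsp T)"
    and "distr \<mu> borel (\<lambda>\<eta>. \<eta> 0) = m0"
  shows "absolutely_continuous (free_law M \<gamma> vth \<theta> \<sigma> m0 T) (mf_prop M \<gamma> vth \<theta> \<sigma> Jbar J T \<mu>)
    \<and> (AE \<eta> in free_law M \<gamma> vth \<theta> \<sigma> m0 T.
         RN_deriv (free_law M \<gamma> vth \<theta> \<sigma> m0 T) (mf_prop M \<gamma> vth \<theta> \<sigma> Jbar J T \<mu>) \<eta> =
         ennreal (\<integral>\<xi>. exp ((1 / \<sigma>\<^sup>2) * (\<Sum>k\<in>{1..T}.
                     - (1/2) * (\<xi> k)\<^sup>2 + Phi M \<gamma> vth \<theta> \<eta> k * \<xi> k))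
                  \<partial>(g_mu M T Jbar J \<mu>)))"
proof -
  let ?P = "free_law M \<gamma> vth \<theta> \<sigma> m0 T"
  let ?g = "g_mu M T Jbar J \<mu>"
  let ?D = "\<lambda>\<eta>. ennreal (\<integral>\<xi>. cameron_martin_density \<sigma> {1..T} \<xi> (Phi M \<gamma> vth \<theta> \<eta>) \<partial>?g)"
  interpret P: prob_space ?P
    using assms(2,5,6) by (rule prob_space_free_law)
  have "prob_space ?g" "sets ?g = sets (Rsp T)"
    using g_mu_is_gaussian[OF assms(7,8)] by (simp_all add: is_gaussian_def)
  then have "?D \<in> borel_measurable ?P"
    using borel_measurable_integral_cameron_martin_density[of ?g T]
    by (simp add: free_law_def prob_space.axioms(1))
  moreover have "mf_prop M \<gamma> vth \<theta> \<sigma> Jbar J T \<mu> = density ?P ?D"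
    using mf_prop_eq_density[OF assms(2,7,8)] assms(9) by simp
  ultimately have "absolutely_continuous ?P (mf_prop M \<gamma> vth \<theta> \<sigma> Jbar J T \<mu>)"
    and "AE \<eta> in ?P. ?D \<eta> = RN_deriv ?P (mf_prop M \<gamma> vth \<theta> \<sigma> Jbar J T \<mu>) \<eta>"
    by (simp_all add: absolutely_continuousI_density P.RN_deriv_unique)
  then show ?thesis
    by (auto simp: cameron_martin_density_def elim: AE_mp)
qed

end
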